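(* In the MemSinks setting described in the context, suppose the model is trained from zero initialization for $N$ total steps, during which the repeated example $(\mathbf{s}^{\mathrm{mem}},\mathbf{e}^{\mathrm{mem}})$ is observed $k$ times and non-repeated examples are observed $N-k$ times, and suppose the memorization activations of $\mathbf{s}^{\mathrm{mem}}$ overlap (have nonzero inner product) with those of at most $p(N-k)$ of the non-repeated steps. Then at the end of training: (1) $(\mathbf{e}^{\mathrm{mem}})^\top f^{(N)}_{\mathrm{shared\text{-}only}}(\mathbf{s}^{\mathrm{mem}})\le \gamma k(1-c_{\min})-\gamma(N-k)\,\epsilon_{\mathrm{shared}}\,c_{\min}$; (2) $(\mathbf{e}^{\mathrm{mem}})^\top f^{(N)}_{\mathrm{mem\text{-}only}}(\mathbf{s}^{\mathrm{mem}})\ge \gamma k(1-c_{\max})-\gamma(N-k)\,p\,\epsilon_{\mathrm{mem}}\,c_{\max}$.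
   Context: Model: $f(\mathbf{z})=\mathbf{W}_{\mathrm{proj}}\mathbf{z}\in\mathbb{R}^V$ with fixed hidden activations $\mathbf{z}(\mathbf{s})=[\mathbf{z}(\mathbf{s})_{\mathrm{shared}};\mathbf{z}(\mathbf{s})_{\mathrm{mem}}]$ split into shared (generalization) neurons and memorization-sink neurons, and $\mathbf{W}_{\mathrm{proj}}=[\mathbf{W}^{\mathrm{shared}}_{\mathrm{proj}}\ \mathbf{W}^{\mathrm{mem}}_{\mathrm{proj}}]$ correspondingly. In MemSinks, each sequence activates a sequence-specific (deterministic, consistent across repetitions) subset of memorization neurons and the rest are masked to zero; $\mathbf{z}(\mathbf{s})_{\mathrm{mem}}$ denotes the masked memorization activation. $f_{\mathrm{shared\text{-}only}}(\mathbf{s})=\mathbf{W}^{\mathrm{shared}}_{\mathrm{proj}}\mathbf{z}(\mathbf{s})_{\mathrm{shared}}$ (memorization neurons dropped out) and $f_{\mathrm{mem\text{-}only}}(\mathbf{s})=\mathbf{W}^{\mathrm{mem}}_{\mathrm{proj}}\mathbf{z}(\mathbf{s})_{\mathrm{mem}}$ (shared neurons dropped out); $f^{(N)}$ denotes parameters after $N$ steps. Training: batch size 1, cross-entropy loss with softmax $\sigma$ applied to the full forward pass $f(\mathbf{z})$, learning rate $\gamma>0$; an update on $(\mathbf{z},\mathbf{e})$ is $\mathbf{W}^{\mathrm{shared}}_{\mathrm{proj}}\leftarrow\mathbf{W}^{\mathrm{shared}}_{\mathrm{proj}}+\gamma(\mathbf{e}-\sigma(f(\mathbf{z})))\mathbf{z}_{\mathrm{shared}}^\top$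 and $\mathbf{W}^{\mathrm{mem}}_{\mathrm{proj}}\leftarrow\mathbf{W}^{\mathrm{mem}}_{\mathrm{proj}}+\gamma(\mathbf{e}-\sigma(f(\mathbf{z})))\mathbf{z}_{\mathrm{mem}}^\top$. Targets are one-hot vectors in $\mathbb{R}^V$, and every non-repeated example has target different from $\mathbf{e}^{\mathrm{mem}}$. Assumptions: $\|\mathbf{z}(\mathbf{s}^{\mathrm{mem}})_{\mathrm{shared}}\|_2=\|\mathbf{z}(\mathbf{s}^{\mathrm{mem}})_{\mathrm{mem}}\|_2=1$; throughout training the logits of every forward pass used in an update satisfy $\|f(\mathbf{z})\|_\infty\le C_{\mathrm{proj}}/2$; for every non-repeated example $\mathbf{s}^{(j)}$, $\mathbf{z}(\mathbf{s}^{\mathrm{mem}})_{\mathrm{shared}}^\top\mathbf{z}(\mathbf{s}^{(j)})_{\mathrm{shared}}\ge\epsilon_{\mathrm{shared}}\ge0$ and $0\le\mathbf{z}(\mathbf{s}^{\mathrm{mem}})_{\mathrm{mem}}^\top\mathbf{z}(\mathbf{s}^{(j)})_{\mathrm{mem}}\le\epsilon_{\mathrm{mem}}$. Constants: $c_{\min}=\exp(-C_{\mathrm{proj}})/V$ and $c_{\max}=\exp(C_{\mathrm{proj}})/(V-1)$, with $V\ge2$. *)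

theory Defs
  imports Complex_Main "HOL-Library.Cardinality"
begin

text \<open>Vectors are functions on finite index types: vocabulary 'v, shared neurons 'h,
memorization neurons 'm. Weight matrices are 'v => 'h => real (rows indexed by vocabulary).\<close>

definition softmax :: "('v::finite \<Rightarrow> real) \<Rightarrow> 'v \<Rightarrow> real" where
  "softmax x v = exp (x v) / (\<Sum>u\<in>UNIV. exp (x u))"

definition onehot :: "'v \<Rightarrow> 'v \<Rightarrow> real" where
  "onehot e v = (if v = e then 1 else 0)"

definition dotp :: "('h::finite \<Rightarrow> real) \<Rightarrow> ('h \<Rightarrow> real) \<Rightarrow> real" where
  "dotp z w = (\<Sum>h\<in>UNIV. z h * w h)"

definition matvec :: "('v \<Rightarrow> 'h::finite \<Rightarrow> real) \<Rightarrow> ('h \<Rightarrow> real) \<Rightarrow> 'v \<Rightarrow> real" where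
  "matvec W z v = (\<Sum>h\<in>UNIV. W v h * z h)"

definition fwd :: "('v \<Rightarrow> 'h::finite \<Rightarrow> real) \<Rightarrow> ('v \<Rightarrow> 'm::finite \<Rightarrow> real)
    \<Rightarrow> ('h \<Rightarrow> real) \<Rightarrow> ('m \<Rightarrow> real) \<Rightarrow> 'v \<Rightarrow> real" where
  "fwd Ws Wm zs zm v = matvec Ws zs v + matvec Wm zm v"

text \<open>Parameters (W_shared, W_mem) after t SGD steps (batch size 1, cross-entropy, lr gamma),
  starting from zero, where step t uses shared activation zs t, masked memorization
  activation zm t and one-hot target e t.\<close>
primrec train :: "real \<Rightarrow> (nat \<Rightarrow> 'h::finite \<Rightarrow> real) \<Rightarrow> (nat \<Rightarrow> 'm::finite \<Rightarrow> real)
    \<Rightarrow> (nat \<Rightarrow> 'v::finite) \<Rightarrow> nat \<Rightarrow> ('v \<Rightarrow> 'h \<Rightarrow> real) \<times> ('v \<Rightarrow> 'm \<Rightarrow> real)" where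
  "train \<gamma> zs zm e 0 = ((\<lambda>v h. 0), (\<lambda>v m. 0))"
| "train \<gamma> zs zm e (Suc t) =
     (let Ws = fst (train \<gamma> zs zm e t); Wm = snd (train \<gamma> zs zm e t);
          g = (\<lambda>v. onehot (e t) v - softmax (fwd Ws Wm (zs t) (zm t)) v)
      in ((\<lambda>v h. Ws v h + \<gamma> * g v * zs t h), (\<lambda>v m. Wm v m + \<gamma> * g v * zm t m)))"

end

theory Submission
  imports Defs
begin

text \<open>Starting from zero, each weight block is the sum of the rank-one updates
  \<open>\<gamma> (e_t - \<sigma>_t) z_t\<^sup>T\<close>, so the target logit of the repeated sequence under either block alone
  is \<open>\<gamma> \<Sum>_t (e_t - \<sigma>_t)[e_mem] \<langle>z_t, z_mem\<rangle>\<close>. Bounded logits confine every softmax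
  probability to \<open>[c_min, c_max]\<close>. A repeated step therefore contributes between
  \<open>\<gamma> (1 - c_max)\<close> and \<open>\<gamma> (1 - c_min)\<close>, while a non-repeated step contributes
  \<open>-\<gamma> \<sigma>_t[e_mem] \<langle>z_t, z_mem\<rangle>\<close>: at most \<open>-\<gamma> c_min \<epsilon>_shared\<close> in the shared block, and at
  least \<open>-\<gamma> c_max \<epsilon>_mem\<close> in the memorization block, where it even vanishes unless the
  memorization masks overlap.\<close>

lemma softmax_lower_bound:
  fixes x :: "'v::finite \<Rightarrow> real"
  assumes bounded: "\<And>u. \<bar>x u\<bar> \<le> C / 2"
  shows "exp (- C) / CARD('v) \<le> softmax x v"
proof -
  have exp_bounds: "exp (- C / 2) \<le> exp (x u)" "exp (x u) \<le> exp (C / 2)" for u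
    using abs_le_D1[OF bounded[of u]] abs_le_D2[OF bounded[of u]] by simp_all
  have "(\<Sum>u\<in>UNIV. exp (x u)) \<le> (\<Sum>u\<in>(UNIV::'v set). exp (C / 2))"
    by (intro sum_mono exp_bounds)
  then have denominator: "(\<Sum>u\<in>UNIV. exp (x u)) \<le> CARD('v) * exp (C / 2)"
    by simp
  have "exp (- C) / CARD('v) = exp (- C / 2) / (CARD('v) * exp (C / 2))"
    by (simp add: exp_add[symmetric] field_simps)
  also have "\<dots> \<le> exp (x v) / (\<Sum>u\<in>UNIV. exp (x u))"
    using exp_bounds(1) denominator by (intro frac_le) (simp_all add: sum_pos)
  finally show ?thesis
    unfolding softmax_def .
qed

lemma softmax_upper_bound:
  fixes x :: "'v::finite \<Rightarrow> real"
  assumes bounded: "\<And>u. \<bar>x u\<bar> \<le> C / 2" and card_ge_2: "CARD('v) \<ge> 2"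
  shows "softmax x v \<le> exp C / (CARD('v) - 1)"
proof -
  have exp_bounds: "exp (- C / 2) \<le> exp (x u)" "exp (x u) \<le> exp (C / 2)" for u
    using abs_le_D1[OF bounded[of u]] abs_le_D2[OF bounded[of u]] by simp_all
  have "(CARD('v) - 1) * exp (- C / 2) = (\<Sum>u\<in>UNIV - {v}. exp (- C / 2))"
    by (simp add: card_Diff_singleton of_nat_diff)
  also have "\<dots> \<le> (\<Sum>u\<in>UNIV - {v}. exp (x u))"
    by (intro sum_mono exp_bounds)
  also have "\<dots> \<le> (\<Sum>u\<in>UNIV. exp (x u))"
    by (rule sum_mono2) auto
  finally have denominator: "(CARD('v) - 1) * exp (- C / 2) \<le> (\<Sum>u\<in>UNIV. exp (x u))" .
  have "softmax x v \<le> exp (C / 2) / ((CARD('v) - 1) * exp (- C / 2))"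
    unfolding softmax_def using exp_bounds(2) denominator card_ge_2
    by (intro frac_le) auto
  also have "\<dots> = exp C / (CARD('v) - 1)"
    by (simp add: exp_minus field_simps exp_add[symmetric])
  finally show ?thesis .
qed

lemma matvec_sum_rank_one_updates:
  assumes "W 0 = (\<lambda>v h. 0)"
    and "\<And>t. W (Suc t) = (\<lambda>v h. W t v h + c t v * z t h)"
  shows "matvec (W n) y v = (\<Sum>t<n. c t v * dotp y (z t))"
  using assms
  by (induction n) (simp_all add: matvec_def dotp_def algebra_simps sum.distrib sum_distrib_left)

lemma sum_le_split:
  fixes f :: "'a \<Rightarrow> 'b::{semiring_1,ordered_comm_monoid_add}"
  assumes "finite A" "R \<subseteq> A"
    and "\<And>t. t \<in> R \<Longrightarrow> f t \<le> a" and "\<And>t. t \<in> A - R \<Longrightarrow> f t \<le> b"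
  shows "sum f A \<le> of_nat (card R) * a + of_nat (card (A - R)) * b"
proof -
  have "sum f A = sum f R + sum f (A - R)"
    using sum.subset_diff[OF assms(2,1), of f] by (simp add: add.commute)
  also have "\<dots> \<le> of_nat (card R) * a + of_nat (card (A - R)) * b"
    using assms(3,4) by (intro add_mono sum_bounded_above) auto
  finally show ?thesis .
qed

lemma sum_ge_split_sparse:
  fixes f :: "'a \<Rightarrow> 'b::{ring_1,ordered_ring}"
  assumes "finite A" "R \<subseteq> A"
    and "\<And>t. t \<in> R \<Longrightarrow> a \<le> f t"
    and "\<And>t. t \<in> A - R \<Longrightarrow> (if P t then - b else 0) \<le> f t"
  shows "of_nat (card R) * a - of_nat (card {t \<in> A - R. P t}) * b \<le> sum f A"
proof -
  have "of_nat (card R) * a - of_nat (card {t \<in> A - R. P t}) * b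
      = of_nat (card R) * a + (\<Sum>t\<in>A - R. if P t then - b else 0)"
    using sum.inter_filter[of "A - R" "\<lambda>_. - b" P] assms(1) by simp
  also have "\<dots> \<le> sum f R + sum f (A - R)"
    using assms(3,4) by (intro add_mono sum_bounded_below sum_mono) auto
  also have "\<dots> = sum f A"
    using sum.subset_diff[OF assms(2,1), of f] by (simp add: add.commute)
  finally show ?thesis .
qed

definition step_logits :: "real \<Rightarrow> (nat \<Rightarrow> 'h::finite \<Rightarrow> real) \<Rightarrow> (nat \<Rightarrow> 'm::finite \<Rightarrow> real)
    \<Rightarrow> (nat \<Rightarrow> 'v::finite) \<Rightarrow> nat \<Rightarrow> 'v \<Rightarrow> real" where
  "step_logits \<gamma> zs zm e t =
     fwd (fst (train \<gamma> zs zm e t)) (snd (train \<gamma> zs zm e t)) (zs t) (zm t)"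

definition step_residual :: "real \<Rightarrow> (nat \<Rightarrow> 'h::finite \<Rightarrow> real) \<Rightarrow> (nat \<Rightarrow> 'm::finite \<Rightarrow> real)
    \<Rightarrow> (nat \<Rightarrow> 'v::finite) \<Rightarrow> nat \<Rightarrow> 'v \<Rightarrow> real" where
  "step_residual \<gamma> zs zm e t v = onehot (e t) v - softmax (step_logits \<gamma> zs zm e t) v"

lemma matvec_train_shared:
  "matvec (fst (train \<gamma> zs zm e n)) y v = \<gamma> * (\<Sum>t<n. step_residual \<gamma> zs zm e t v * dotp y (zs t))"
  by (subst matvec_sum_rank_one_updates[where c = "\<lambda>t v. \<gamma> * step_residual \<gamma> zs zm e t v"])
     (simp_all add: step_residual_def step_logits_def Let_def sum_distrib_left mult.assoc)

lemma matvec_train_mem: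
  "matvec (snd (train \<gamma> zs zm e n)) y v = \<gamma> * (\<Sum>t<n. step_residual \<gamma> zs zm e t v * dotp y (zm t))"
  by (subst matvec_sum_rank_one_updates[where c = "\<lambda>t v. \<gamma> * step_residual \<gamma> zs zm e t v"])
     (simp_all add: step_residual_def step_logits_def Let_def sum_distrib_left mult.assoc)

lemma step_residual_le:
  fixes e :: "nat \<Rightarrow> 'v::finite"
  assumes "\<And>u. \<bar>step_logits \<gamma> zs zm e t u\<bar> \<le> C / 2"
  shows "step_residual \<gamma> zs zm e t v \<le> onehot (e t) v - exp (- C) / CARD('v)"
  using softmax_lower_bound[of "step_logits \<gamma> zs zm e t", OF assms] unfolding step_residual_def by simp

lemma step_residual_ge:
  fixes e :: "nat \<Rightarrow> 'v::finite"
  assumes "\<And>u. \<bar>step_logits \<gamma> zs zm e t u\<bar> \<le> C / 2" and "CARD('v) \<ge> 2"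
  shows "onehot (e t) v - exp C / (CARD('v) - 1) \<le> step_residual \<gamma> zs zm e t v"
  using softmax_upper_bound[of "step_logits \<gamma> zs zm e t", OF assms] unfolding step_residual_def by simp

lemma shared_only_target_logit_le:
  fixes zs :: "nat \<Rightarrow> 'h::finite \<Rightarrow> real" and e :: "nat \<Rightarrow> 'v::finite"
  assumes "\<gamma> \<ge> 0" and "R \<subseteq> {..<N}"
    and repeated: "\<And>t. t \<in> R \<Longrightarrow> zs t = zsM \<and> e t = eM"
    and other_target: "\<And>t. t \<in> {..<N} - R \<Longrightarrow> e t \<noteq> eM"
    and unit: "dotp zsM zsM = 1"
    and bounded: "\<And>t u. t < N \<Longrightarrow> \<bar>step_logits \<gamma> zs zm e t u\<bar> \<le> C / 2"
    and "eps_s \<ge> 0"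
    and overlap: "\<And>t. t \<in> {..<N} - R \<Longrightarrow> eps_s \<le> dotp zsM (zs t)"
  shows "matvec (fst (train \<gamma> zs zm e N)) zsM eM
    \<le> \<gamma> * card R * (1 - exp (- C) / CARD('v))
       - \<gamma> * real (N - card R) * eps_s * (exp (- C) / CARD('v))"
proof -
  define c where "c = exp (- C) / CARD('v)"
  have residual: "step_residual \<gamma> zs zm e t eM \<le> onehot (e t) eM - c" if "t < N" for t
    unfolding c_def using step_residual_le bounded[OF that] .
  have "(\<Sum>t<N. step_residual \<gamma> zs zm e t eM * dotp zsM (zs t))
      \<le> card R * (1 - c) + card ({..<N} - R) * (- c * eps_s)"
  proof (rule sum_le_split)
    fix t assume "t \<in> R"
    then show "step_residual \<gamma> zs zm e t eM * dotp zsM (zs t) \<le> 1 - c"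
      using residual[of t] repeated[of t] unit \<open>R \<subseteq> {..<N}\<close> by (auto simp: onehot_def)
  next
    fix t assume t: "t \<in> {..<N} - R"
    have "step_residual \<gamma> zs zm e t eM \<le> - c"
      using residual[of t] other_target[OF t] t by (simp add: onehot_def)
    then have "step_residual \<gamma> zs zm e t eM * dotp zsM (zs t) \<le> - c * dotp zsM (zs t)"
      using overlap[OF t] \<open>eps_s \<ge> 0\<close> by (intro mult_right_mono) auto
    also have "\<dots> \<le> - c * eps_s"
      using overlap[OF t] by (intro mult_left_mono_neg) (simp_all add: c_def)
    finally show "step_residual \<gamma> zs zm e t eM * dotp zsM (zs t) \<le> - c * eps_s" .
  qed (use \<open>R \<subseteq> {..<N}\<close> in auto)
  moreover have "card ({..<N} - R) = N - card R"
    using \<open>R \<subseteq> {..<N}\<close> by (simp add: card_Diff_subset finite_subset)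
  ultimately have "matvec (fst (train \<gamma> zs zm e N)) zsM eM
      \<le> \<gamma> * (card R * (1 - c) + (N - card R) * (- c * eps_s))"
    unfolding matvec_train_shared using \<open>\<gamma> \<ge> 0\<close> by (intro mult_left_mono) simp_all
  then show ?thesis
    unfolding c_def by (simp add: algebra_simps)
qed

lemma mem_only_target_logit_ge:
  fixes zm :: "nat \<Rightarrow> 'm::finite \<Rightarrow> real" and e :: "nat \<Rightarrow> 'v::finite"
  assumes "CARD('v) \<ge> 2" and "\<gamma> \<ge> 0" and "R \<subseteq> {..<N}"
    and repeated: "\<And>t. t \<in> R \<Longrightarrow> zm t = zmM \<and> e t = eM"
    and other_target: "\<And>t. t \<in> {..<N} - R \<Longrightarrow> e t \<noteq> eM"
    and unit: "dotp zmM zmM = 1"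
    and bounded: "\<And>t u. t < N \<Longrightarrow> \<bar>step_logits \<gamma> zs zm e t u\<bar> \<le> C / 2"
    and overlap: "\<And>t. t \<in> {..<N} - R \<Longrightarrow> 0 \<le> dotp zmM (zm t) \<and> dotp zmM (zm t) \<le> eps_m"
    and sparse: "real (card {t \<in> {..<N} - R. dotp zmM (zm t) \<noteq> 0}) \<le> p * real (N - card R)"
  shows "\<gamma> * card R * (1 - exp C / (CARD('v) - 1))
       - \<gamma> * real (N - card R) * p * eps_m * (exp C / (CARD('v) - 1))
    \<le> matvec (snd (train \<gamma> zs zm e N)) zmM eM"
proof -
  define c where "c = exp C / (CARD('v) - 1)"
  define Z where "Z = {t \<in> {..<N} - R. dotp zmM (zm t) \<noteq> 0}"
  have "c \<ge> 0"
    unfolding c_def using \<open>CARD('v) \<ge> 2\<close> by simp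
  have residual: "onehot (e t) eM - c \<le> step_residual \<gamma> zs zm e t eM" if "t < N" for t
    unfolding c_def using step_residual_ge bounded[OF that] \<open>CARD('v) \<ge> 2\<close> .
  have "card R * (1 - c) - card Z * (c * eps_m)
      \<le> (\<Sum>t<N. step_residual \<gamma> zs zm e t eM * dotp zmM (zm t))"
    unfolding Z_def
  proof (rule sum_ge_split_sparse)
    fix t assume "t \<in> R"
    then show "1 - c \<le> step_residual \<gamma> zs zm e t eM * dotp zmM (zm t)"
      using residual[of t] repeated[of t] unit \<open>R \<subseteq> {..<N}\<close> by (auto simp: onehot_def)
  next
    fix t assume t: "t \<in> {..<N} - R"
    have "- c \<le> step_residual \<gamma> zs zm e t eM"
      using residual[of t] other_target[OF t] t by (simp add: onehot_def)
    then have "- c * dotp zmM (zm t) \<le> step_residual \<gamma> zs zm e t eM * dotp zmM (zm t)"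
      using overlap[OF t] by (intro mult_right_mono) auto
    moreover have "- (c * eps_m) \<le> - c * dotp zmM (zm t)"
      using overlap[OF t] \<open>c \<ge> 0\<close> by (simp add: mult_left_mono)
    ultimately show "(if dotp zmM (zm t) \<noteq> 0 then - (c * eps_m) else 0)
        \<le> step_residual \<gamma> zs zm e t eM * dotp zmM (zm t)"
      by auto
  qed (use \<open>R \<subseteq> {..<N}\<close> in auto)
  moreover have "card Z * (c * eps_m) \<le> p * (N - card R) * (c * eps_m)"
  \<comment> \<open>\<open>eps_m\<close> is only known to be nonnegative when some step is non-repeated\<close>
  proof (cases "{..<N} - R = {}")
    case True
    then have "R = {..<N}"
      using \<open>R \<subseteq> {..<N}\<close> by blast
    then show ?thesis
      by (simp add: Z_def)
  next
    case False
    then have "eps_m \<ge> 0"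
      using overlap by fastforce
    then show ?thesis
      using sparse \<open>c \<ge> 0\<close> unfolding Z_def by (intro mult_right_mono) simp_all
  qed
  ultimately have "card R * (1 - c) - p * (N - card R) * (c * eps_m)
      \<le> (\<Sum>t<N. step_residual \<gamma> zs zm e t eM * dotp zmM (zm t))"
    by linarith
  then have "\<gamma> * (card R * (1 - c) - p * (N - card R) * (c * eps_m))
      \<le> matvec (snd (train \<gamma> zs zm e N)) zmM eM"
    unfolding matvec_train_mem using \<open>\<gamma> \<ge> 0\<close> by (rule mult_left_mono)
  then show ?thesis
    unfolding c_def by (simp add: algebra_simps)
qed

theorem theoremG3:
  fixes \<gamma> C p eps_s eps_m :: real
    and N k :: nat
    and R :: "nat set"
    and zs :: "nat \<Rightarrow> 'h::finite \<Rightarrow> real"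
    and zm :: "nat \<Rightarrow> 'm::finite \<Rightarrow> real"
    and e :: "nat \<Rightarrow> 'v::finite"
    and zsM :: "'h \<Rightarrow> real" and zmM :: "'m \<Rightarrow> real" and eM :: "'v"
  assumes V2: "CARD('v) \<ge> 2"
    and gamma_pos: "\<gamma> > 0"
    and R_sub: "R \<subseteq> {..<N}" and R_card: "card R = k"
    and rep: "\<And>t. t \<in> R \<Longrightarrow> zs t = zsM \<and> zm t = zmM \<and> e t = eM"
    and nonrep_target: "\<And>t. t \<in> {..<N} - R \<Longrightarrow> e t \<noteq> eM"
    and norm_s: "sqrt (dotp zsM zsM) = 1"
    and norm_m: "sqrt (dotp zmM zmM) = 1"
    and logits: "\<And>t v. t < N \<Longrightarrow>
       \<bar>fwd (fst (train \<gamma> zs zm e t)) (snd (train \<gamma> zs zm e t)) (zs t) (zm t) v\<bar> \<le> C / 2"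
    and eps_s_nonneg: "eps_s \<ge> 0"
    and shared_overlap: "\<And>t. t \<in> {..<N} - R \<Longrightarrow> dotp zsM (zs t) \<ge> eps_s"
    and mem_overlap: "\<And>t. t \<in> {..<N} - R \<Longrightarrow> 0 \<le> dotp zmM (zm t) \<and> dotp zmM (zm t) \<le> eps_m"
    and sparse: "real (card {t \<in> {..<N} - R. dotp zmM (zm t) \<noteq> 0}) \<le> p * real (N - k)"
  shows "matvec (fst (train \<gamma> zs zm e N)) zsM eM
           \<le> \<gamma> * k * (1 - exp (- C) / CARD('v)) - \<gamma> * real (N - k) * eps_s * (exp (- C) / CARD('v))
       \<and> matvec (snd (train \<gamma> zs zm e N)) zmM eM
           \<ge> \<gamma> * k * (1 - exp C / (CARD('v) - 1)) - \<gamma> * real (N - k) * p * eps_m * (exp C / (CARD('v) - 1))"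
proof -
  have bounded: "\<And>t u. t < N \<Longrightarrow> \<bar>step_logits \<gamma> zs zm e t u\<bar> \<le> C / 2"
    using logits unfolding step_logits_def .
  have "dotp zsM zsM = 1" "dotp zmM zmM = 1"
    using norm_s norm_m by simp_all
  then show ?thesis
    using shared_only_target_logit_le[OF _ R_sub _ nonrep_target _ bounded eps_s_nonneg shared_overlap]
      mem_only_target_logit_ge[OF V2 _ R_sub _ nonrep_target _ bounded mem_overlap]
      rep gamma_pos sparse R_card
    by auto
qed

end
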